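(* Consider any sequences evolved by Algorithm 1 and let $d_0:=\|x^*-x^0\|$. Then: (a) for all $k\ge1$, $h(y^k)-h(x^* )\le\frac{d_0^2}{2A_k}$, $\|x^*-y^k\|^2\le\frac{d_0^2}{\mu A_k}$, and $\|x^*-x^k\|^2\le\frac{d_0^2}{1+\mu A_k}$; (b) for all $k\ge1$, $v^{k+1}\in\partial_{\varepsilon_{k+1}}f(y^{k+1})+\partial g(y^{k+1})$, $\|v^{k+1}\|^2\le\frac{6\big(1+\sigma\sqrt{1+\mu\lambda_{k+1}}\big)^2}{\lambda_{k+1}^2}\cdot\frac{d_0^2}{\mu A_k}$, and $\varepsilon_{k+1}\le\frac{3\sigma^2}{\lambda_{k+1}}\cdot\frac{d_0^2}{\mu A_k}$.
   Context: Setting: $\mathcal H$ is a finite-dimensional real inner product space with inner product $\langle\cdot,\cdot\rangle$ and norm $\|\cdot\|$. $f,g:\mathcal H\to(-\infty,\infty]$ are proper, closed, convex functions, $h:=f+g$ has nonempty domain, and $g$ is $\mu$-strongly convex for some $\mu>0$, i.e. $g(tx+(1-t)y)\le tg(x)+(1-t)g(y)-\frac{\mu}{2}t(1-t)\|x-y\|^2$ for all $x,y\in\mathcal H$, $t\in[0,1]$. $x^*$ denotes the unique minimizer of $h$. For $\varepsilon\ge 0$, $\partial_\varepsilon f(y):=\{u\in\mathcal H: f(w)\ge f(y)+\langle u,w-y\rangle-\varepsilon\ \forall w\in\mathcal H\}$, and $\partial g:=\partial_0 g$. Algorithm 1: Choose $x^0,y^0\in\mathcal H$ and $\sigma\in[0,1]$,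 and set $A_0=0$. For $k=0,1,2,\dots$: choose $\lambda_{k+1}>0$, set $a_{k+1}=\frac{(1+2\mu A_k)\lambda_{k+1}+\sqrt{(1+2\mu A_k)^2\lambda_{k+1}^2+4(1+\mu A_k)A_k\lambda_{k+1}}}{2}$ and $\tilde x^k=\frac{a_{k+1}-\mu A_k\lambda_{k+1}}{A_k+a_{k+1}}x^k+\frac{A_k+\mu A_k\lambda_{k+1}}{A_k+a_{k+1}}y^k$; compute $(y^{k+1},v^{k+1},\varepsilon_{k+1})\in\mathcal H\times\mathcal H\times[0,\infty)$ such that $v^{k+1}\in\partial_{\varepsilon_{k+1}}f(y^{k+1})+\partial g(y^{k+1})$ and $\frac{\|\lambda_{k+1}v^{k+1}+y^{k+1}-\tilde x^k\|^2}{1+\lambda_{k+1}\mu}+2\lambda_{k+1}\varepsilon_{k+1}\le\sigma^2\|y^{k+1}-\tilde x^k\|^2$; then set $A_{k+1}=A_k+a_{k+1}$ and $x^{k+1}=\frac{1+\mu A_k}{1+\mu A_{k+1}}x^k+\frac{\mu a_{k+1}}{1+\mu A_{k+1}}y^{k+1}-\frac{a_{k+1}}{1+\mu A_{k+1}}v^{k+1}$. "Sequences evolved by Algorithm 1" means any sequences satisfying all these relations for every $k\ge 0$. *)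

theory Defs
  imports "HOL-Analysis.Analysis"
begin

definition proper_fun :: "('a \<Rightarrow> ereal) \<Rightarrow> bool" where
  "proper_fun f \<longleftrightarrow> (\<forall>x. f x \<noteq> -\<infinity>) \<and> (\<exists>x. f x \<noteq> \<infinity>)"

definition closed_fun :: "('a::topological_space \<Rightarrow> ereal) \<Rightarrow> bool" where
  "closed_fun f \<longleftrightarrow> closed {(x, t::real). f x \<le> ereal t}"

definition convex_fun :: "('a::real_vector \<Rightarrow> ereal) \<Rightarrow> bool" where
  "convex_fun f \<longleftrightarrow> (\<forall>x y t. 0 \<le> t \<and> t \<le> 1 \<longrightarrow>
      f (t *\<^sub>R x + (1 - t) *\<^sub>R y) \<le> ereal t * f x + ereal (1 - t) * f y)"

definition strongly_convex_fun :: "real \<Rightarrow> ('a::real_normed_vector \<Rightarrow> ereal) \<Rightarrow> bool" where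
  "strongly_convex_fun \<mu> g \<longleftrightarrow> (\<forall>x y t. 0 \<le> t \<and> t \<le> 1 \<longrightarrow>
      g (t *\<^sub>R x + (1 - t) *\<^sub>R y) \<le> ereal t * g x + ereal (1 - t) * g y
        - ereal (\<mu> / 2 * t * (1 - t) * (norm (x - y))\<^sup>2))"

text \<open>epsilon-subdifferential; the ordinary subdifferential is the case epsilon = 0.\<close>
definition eps_subdiff :: "('a::real_inner \<Rightarrow> ereal) \<Rightarrow> real \<Rightarrow> 'a \<Rightarrow> 'a set" where
  "eps_subdiff f \<epsilon> y = {u. \<forall>w. f w \<ge> f y + ereal (inner u (w - y) - \<epsilon>)}"

end

theory Submission
  imports Defs
begin

(* The analysis rests on the potential
     A_k (h(y_k) - h(xstar)) + (1 + mu A_k)/2 ||xstar - x_k||^2,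
   which never increases. The inclusion for v_{k+1} makes
     Gamma_k(u) = h(y_{k+1}) + <v_{k+1}, u - y_{k+1}> - eps_{k+1} + mu/2 ||u - y_{k+1}||^2
   a lower model of h. The update x_{k+1} minimizes a_{k+1} Gamma_k + (1 + mu A_k)/2 ||. - x_k||^2,
   and the relative error condition makes Gamma_k - h(y_{k+1}) + ||. - xt_k||^2 / (2 lambda_{k+1})
   nonnegative. The quadratic equation defining a_{k+1} is exactly what allows these two facts,
   evaluated at a convex combination of y_k and x_{k+1}, to combine into the decrease of the
   potential.
   Bounding the potential by d_0^2/2 and using the quadratic growth of h around xstar gives (a).
   For (b), (a) places y_{k+1}, x_k, y_k and hence xt_k in the ball of radius d_0/sqrt(mu A_k)
   around xstar, and the error condition bounds v_{k+1} and eps_{k+1} by ||y_{k+1} - xt_k||. *)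

lemma power2_norm_add:
  fixes p q :: "'a::real_inner"
  shows "(norm (p + q))\<^sup>2 = (norm p)\<^sup>2 + 2 * inner p q + (norm q)\<^sup>2"
  by (simp add: power2_norm_eq_inner inner_add_left inner_add_right inner_commute)

lemma add_le_of_forall_shrinking:
  fixes K D b :: real
  assumes le: "\<And>t. 0 < t \<Longrightarrow> t \<le> 1 \<Longrightarrow> K + (1 - t) * D \<le> b"
  shows "K + D \<le> b"
proof (rule field_le_epsilon)
  fix e :: real
  assume e: "0 < e"
  define t where "t = min 1 (e / (\<bar>D\<bar> + 1))"
  have t: "0 < t" "t \<le> 1"
    using e by (auto simp: t_def)
  have "t * D \<le> t * \<bar>D\<bar>"
    using t by (simp add: mult_left_mono)
  also have "\<dots> \<le> e / (\<bar>D\<bar> + 1) * \<bar>D\<bar>"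
    by (intro mult_right_mono) (auto simp: t_def)
  also have "\<dots> \<le> e"
    using e by (simp add: field_simps)
  finally show "K + D \<le> b + e"
    using le[OF t] by (simp add: algebra_simps)
qed

lemma eps_subdiff_finite:
  assumes "proper_fun f" "p \<in> eps_subdiff f e y"
  shows "\<bar>f y\<bar> \<noteq> \<infinity>"
proof -
  obtain w where "f w \<noteq> \<infinity>"
    using assms(1) unfolding proper_fun_def by auto
  moreover have "f y + ereal (inner p (w - y) - e) \<le> f w"
    using assms(2) unfolding eps_subdiff_def by auto
  ultimately show ?thesis
    using assms(1) unfolding proper_fun_def by auto
qed

lemma strongly_convex_subgradient_ineq:
  fixes g :: "'a::real_inner \<Rightarrow> ereal"
  assumes proper: "proper_fun g" and sc: "strongly_convex_fun \<mu> g"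
    and q: "q \<in> eps_subdiff g 0 y" and gy: "g y = ereal gy"
  shows "ereal (gy + inner q (u - y) + \<mu> / 2 * (norm (u - y))\<^sup>2) \<le> g u"
proof (cases "g u")
  case (real gu)
  have "gy + inner q (u - y) + \<mu> / 2 * (norm (u - y))\<^sup>2 \<le> gu"
  proof (rule add_le_of_forall_shrinking)
    fix t :: real
    assume t: "0 < t" "t \<le> 1"
    define z where "z = t *\<^sub>R u + (1 - t) *\<^sub>R y"
    have "g z \<le> ereal t * g u + ereal (1 - t) * g y - ereal (\<mu> / 2 * t * (1 - t) * (norm (u - y))\<^sup>2)"
      using sc t unfolding strongly_convex_fun_def z_def by auto
    then have upper: "g z \<le> ereal (t * gu + (1 - t) * gy - \<mu> / 2 * t * (1 - t) * (norm (u - y))\<^sup>2)"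
      by (simp add: real gy)
    have "g y + ereal (inner q (z - y) - 0) \<le> g z"
      using q unfolding eps_subdiff_def by auto
    moreover have "z - y = t *\<^sub>R (u - y)"
      unfolding z_def by (simp add: algebra_simps)
    ultimately have lower: "ereal (gy + t * inner q (u - y)) \<le> g z"
      by (simp add: gy)
    have "gy + t * inner q (u - y) \<le> t * gu + (1 - t) * gy - \<mu> / 2 * t * (1 - t) * (norm (u - y))\<^sup>2"
      using order_trans[OF lower upper] by simp
    then have "t * (gy + inner q (u - y) + (1 - t) * (\<mu> / 2 * (norm (u - y))\<^sup>2)) \<le> t * gu"
      by (simp add: algebra_simps)
    then show "gy + inner q (u - y) + (1 - t) * (\<mu> / 2 * (norm (u - y))\<^sup>2) \<le> gu"
      using t by simp
  qed
  then show ?thesis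
    by (simp add: real)
qed (use proper in \<open>auto simp: proper_fun_def\<close>)

lemma strongly_convex_quadratic_growth:
  fixes f g :: "'a::real_inner \<Rightarrow> ereal"
  assumes f: "convex_fun f" and sc: "strongly_convex_fun \<mu> g"
    and min: "\<forall>z. f xs + g xs \<le> f z + g z"
    and fs: "f xs = ereal fs" and gs: "g xs = ereal gs"
    and fy: "f y = ereal fy" and gy: "g y = ereal gy"
  shows "fs + gs + \<mu> / 2 * (norm (y - xs))\<^sup>2 \<le> fy + gy"
proof (rule add_le_of_forall_shrinking)
  fix t :: real
  assume t: "0 < t" "t \<le> 1"
  define z where "z = t *\<^sub>R y + (1 - t) *\<^sub>R xs"
  have "f z \<le> ereal t * f y + ereal (1 - t) * f xs"
    using f t unfolding convex_fun_def z_def by auto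
  moreover have "g z \<le> ereal t * g y + ereal (1 - t) * g xs - ereal (\<mu> / 2 * t * (1 - t) * (norm (y - xs))\<^sup>2)"
    using sc t unfolding strongly_convex_fun_def z_def by auto
  ultimately have "f z + g z \<le> ereal (t * fy + (1 - t) * fs + (t * gy + (1 - t) * gs - \<mu> / 2 * t * (1 - t) * (norm (y - xs))\<^sup>2))"
    using add_mono by (fastforce simp: fy gy fs gs)
  moreover have "ereal (fs + gs) \<le> f z + g z"
    using min fs gs by (metis plus_ereal.simps(1))
  ultimately have "fs + gs \<le> t * fy + (1 - t) * fs + (t * gy + (1 - t) * gs - \<mu> / 2 * t * (1 - t) * (norm (y - xs))\<^sup>2)"
    by (metis order_trans ereal_less_eq(3))
  then have "t * (fs + gs + (1 - t) * (\<mu> / 2 * (norm (y - xs))\<^sup>2)) \<le> t * (fy + gy)"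
    by (simp add: algebra_simps)
  then show "fs + gs + (1 - t) * (\<mu> / 2 * (norm (y - xs))\<^sup>2) \<le> fy + gy"
    using t by simp
qed

text \<open>Up to the constant \<open>h z\<close>, \<open>quad_model \<mu> v e z\<close> is the lower model of \<open>h = f + g\<close>
  provided by \<open>v \<in> eps_subdiff f e z + eps_subdiff g 0 z\<close> when \<open>g\<close> is \<open>\<mu>\<close>-strongly convex.\<close>

definition quad_model :: "real \<Rightarrow> 'a::real_inner \<Rightarrow> real \<Rightarrow> 'a \<Rightarrow> 'a \<Rightarrow> real" where
  "quad_model \<mu> v e z u = inner v (u - z) - e + \<mu> / 2 * (norm (u - z))\<^sup>2"

lemma quad_model_prox_nonneg:
  fixes v y' xt w :: "'a::real_inner"
  assumes lam: "lam > 0" and mu: "\<mu> \<ge> 0" and s: "0 \<le> s" "s \<le> 1"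
    and err: "(norm (lam *\<^sub>R v + y' - xt))\<^sup>2 / (1 + lam * \<mu>) + 2 * lam * e \<le> s\<^sup>2 * (norm (y' - xt))\<^sup>2"
  shows "0 \<le> quad_model \<mu> v e y' w + (norm (w - xt))\<^sup>2 / (2 * lam)"
proof -
  define r where "r = lam *\<^sub>R v + y' - xt"
  define z where "z = w - y'"
  define d where "d = y' - xt"
  have c: "1 + lam * \<mu> > 0"
    using lam mu by (simp add: add_pos_nonneg)
  have "(norm ((1 + lam * \<mu>) *\<^sub>R z + r))\<^sup>2
      = (1 + lam * \<mu>)\<^sup>2 * (norm z)\<^sup>2 + 2 * (1 + lam * \<mu>) * inner z r + (norm r)\<^sup>2"
    by (simp add: power2_norm_add power_mult_distrib)
  then have "0 \<le> ((1 + lam * \<mu>)\<^sup>2 * (norm z)\<^sup>2 + 2 * (1 + lam * \<mu>) * inner z r + (norm r)\<^sup>2) / (1 + lam * \<mu>)"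
    using c by (metis divide_nonneg_pos zero_le_power2)
  also have "\<dots> = (1 + lam * \<mu>) * (norm z)\<^sup>2 + 2 * inner z r + (norm r)\<^sup>2 / (1 + lam * \<mu>)"
    using c by (simp add: field_simps power2_eq_square)
  finally have square: "- ((norm r)\<^sup>2 / (1 + lam * \<mu>)) \<le> (1 + lam * \<mu>) * (norm z)\<^sup>2 + 2 * inner z r"
    by linarith
  have "s\<^sup>2 * (norm d)\<^sup>2 \<le> (norm d)\<^sup>2"
    using s by (simp add: power_le_one mult_left_le_one_le)
  then have err': "(norm r)\<^sup>2 / (1 + lam * \<mu>) + 2 * lam * e \<le> (norm d)\<^sup>2"
    using err unfolding r_def d_def by linarith
  have lv: "lam *\<^sub>R v = r - d"
    by (simp add: r_def d_def)
  have "2 * lam * (quad_model \<mu> v e y' w + (norm (w - xt))\<^sup>2 / (2 * lam))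
      = 2 * inner (lam *\<^sub>R v) z - 2 * lam * e + lam * \<mu> * (norm z)\<^sup>2 + (norm (z + d))\<^sup>2"
    using lam by (simp add: quad_model_def z_def d_def field_simps)
  also have "\<dots> = 2 * inner z r + (1 + lam * \<mu>) * (norm z)\<^sup>2 + (norm d)\<^sup>2 - 2 * lam * e"
    unfolding lv power2_norm_add by (simp add: inner_diff_left inner_commute algebra_simps)
  finally have "0 \<le> 2 * lam * (quad_model \<mu> v e y' w + (norm (w - xt))\<^sup>2 / (2 * lam))"
    using square err' by linarith
  then show ?thesis
    using lam by (simp add: zero_le_mult_iff)
qed

lemma power2_norm_convex_combination:
  fixes p q :: "'a::real_inner"
  shows "t * (norm p)\<^sup>2 + (1 - t) * (norm q)\<^sup>2
       = (norm (t *\<^sub>R p + (1 - t) *\<^sub>R q))\<^sup>2 + t * (1 - t) * (norm (p - q))\<^sup>2"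
  unfolding power2_norm_eq_inner
  by (simp add: inner_add_left inner_add_right inner_diff_left inner_diff_right inner_commute algebra_simps)

lemma quad_model_convex_combination:
  fixes y u z v :: "'a::real_inner"
  assumes "A + a \<noteq> 0"
  shows "A * quad_model \<mu> v e z y + a * quad_model \<mu> v e z u
       = (A + a) * quad_model \<mu> v e z ((A / (A + a)) *\<^sub>R y + (a / (A + a)) *\<^sub>R u)
       + \<mu> * A * a / (2 * (A + a)) * (norm (y - u))\<^sup>2"
proof -
  define B t where "B = A + a" and "t = A / B"
  have A: "A = B * t" and a: "a = B * (1 - t)" and a': "a / B = 1 - t"
    using assms by (simp_all add: t_def B_def field_simps)
  define Y U where "Y = y - z" and "U = u - z"
  have W: "t *\<^sub>R y + (1 - t) *\<^sub>R u - z = t *\<^sub>R Y + (1 - t) *\<^sub>R U" and yu: "y - u = Y - U"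
    by (simp_all add: Y_def U_def algebra_simps)
  have convex: "t * quad_model \<mu> v e z y + (1 - t) * quad_model \<mu> v e z u
      = quad_model \<mu> v e z (t *\<^sub>R y + (1 - t) *\<^sub>R u) + \<mu> / 2 * (t * (1 - t)) * (norm (y - u))\<^sup>2"
    using arg_cong[where f = "\<lambda>r. \<mu> / 2 * r", OF power2_norm_convex_combination[of t Y U]]
    unfolding quad_model_def W yu Y_def[symmetric] U_def[symmetric]
    by (simp add: inner_add_right algebra_simps) (simp add: field_simps)
  have coeff: "\<mu> * A * a / (2 * B) = B * (\<mu> / 2 * (t * (1 - t)))"
    using assms unfolding A a B_def[symmetric] by (simp add: field_simps)
  have "A * quad_model \<mu> v e z y + a * quad_model \<mu> v e z u
      = B * (t * quad_model \<mu> v e z y + (1 - t) * quad_model \<mu> v e z u)"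
    by (simp add: A a algebra_simps)
  also have "\<dots> = B * quad_model \<mu> v e z (t *\<^sub>R y + (1 - t) *\<^sub>R u) + \<mu> * A * a / (2 * B) * (norm (y - u))\<^sup>2"
    unfolding convex coeff by (simp add: algebra_simps)
  finally show ?thesis
    unfolding B_def[symmetric] t_def[symmetric] a' .
qed

lemma quad_model_three_point:
  fixes u x x' z v :: "'a::real_inner"
  assumes c: "c + \<mu> * a \<noteq> 0"
    and x': "x' = (c / (c + \<mu> * a)) *\<^sub>R x + (\<mu> * a / (c + \<mu> * a)) *\<^sub>R z - (a / (c + \<mu> * a)) *\<^sub>R v"
  shows "a * quad_model \<mu> v e z u + c / 2 * (norm (u - x))\<^sup>2
     = a * quad_model \<mu> v e z x' + c / 2 * (norm (x' - x))\<^sup>2 + (c + \<mu> * a) / 2 * (norm (u - x'))\<^sup>2"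
proof -
  define D where "D = u - x'"
  have "(c + \<mu> * a) *\<^sub>R x' = c *\<^sub>R x + (\<mu> * a) *\<^sub>R z - a *\<^sub>R v"
    using c unfolding x' by (simp add: scaleR_add_right scaleR_diff_right)
  then have "a *\<^sub>R v + (a * \<mu>) *\<^sub>R (x' - z) + c *\<^sub>R (x' - x) = 0"
    by (simp add: algebra_simps)
  \<comment> \<open>\<open>x'\<close> is the stationary point of the left-hand side as a function of \<open>u\<close>.\<close>
  then have optimality: "a * inner v D + a * \<mu> * inner (x' - z) D + c * inner (x' - x) D = 0"
    by (metis inner_add_left inner_scaleR_left inner_zero_left)
  have split: "u - z = D + (x' - z)" "u - x = D + (x' - x)" "u - x' = D"
    by (simp_all add: D_def)
  have "a * quad_model \<mu> v e z u + c / 2 * (norm (u - x))\<^sup>2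
      - (a * quad_model \<mu> v e z x' + c / 2 * (norm (x' - x))\<^sup>2 + (c + \<mu> * a) / 2 * (norm (u - x'))\<^sup>2)
     = a * inner v D + a * \<mu> * inner (x' - z) D + c * inner (x' - x) D"
    unfolding quad_model_def split power2_norm_add by (simp add: inner_add_right inner_commute algebra_simps)
  then show ?thesis
    using optimality by simp
qed

lemma accelerated_stepsize:
  fixes A lam \<mu> a :: real
  assumes A: "A \<ge> 0" and lam: "lam > 0" and mu: "\<mu> \<ge> 0"
    and a: "a = ((1 + 2 * \<mu> * A) * lam + sqrt (((1 + 2 * \<mu> * A) * lam)\<^sup>2 + 4 * (1 + \<mu> * A) * A * lam)) / 2"
  shows "a > 0" and "a\<^sup>2 = lam * ((1 + 2 * \<mu> * A) * a + (1 + \<mu> * A) * A)" and "\<mu> * A * lam \<le> a"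
proof -
  define B C where "B = (1 + 2 * \<mu> * A) * lam" and "C = 4 * (1 + \<mu> * A) * A * lam"
  have B: "B > 0" and C: "C \<ge> 0"
    using A lam mu by (simp_all add: B_def C_def add_pos_nonneg)
  have root: "2 * a - B = sqrt (B\<^sup>2 + C)"
    unfolding a B_def C_def by (simp add: field_simps)
  then have "(2 * a - B)\<^sup>2 = B\<^sup>2 + C"
    using B C by simp
  then show "a\<^sup>2 = lam * ((1 + 2 * \<mu> * A) * a + (1 + \<mu> * A) * A)"
    unfolding B_def C_def by (simp add: algebra_simps power2_eq_square)
  have "B \<le> sqrt (B\<^sup>2 + C)"
    using B C by (metis abs_of_pos le_add_same_cancel1 real_sqrt_abs real_sqrt_le_mono)
  then have "B \<le> a"
    using root by simp
  then show "a > 0"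
    using B by simp
  have "\<mu> * A * lam \<le> B"
    unfolding B_def using A lam mu by (simp add: algebra_simps)
  with \<open>B \<le> a\<close> show "\<mu> * A * lam \<le> a"
    by simp
qed

lemma extrapolation_prox_bound:
  fixes x y x' xt :: "'a::real_inner"
  assumes lam: "lam > 0" and A: "A \<ge> 0" and a: "a > 0" and mu: "\<mu> \<ge> 0"
    and quad: "a\<^sup>2 = lam * ((1 + 2 * \<mu> * A) * a + (1 + \<mu> * A) * A)"
    and a_ge: "\<mu> * A * lam \<le> a"
    and xt: "xt = ((a - \<mu> * A * lam) / (A + a)) *\<^sub>R x + ((A + \<mu> * A * lam) / (A + a)) *\<^sub>R y"
  shows "(A + a) * ((norm ((A / (A + a)) *\<^sub>R y + (a / (A + a)) *\<^sub>R x' - xt))\<^sup>2 / (2 * lam))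
      \<le> \<mu> * A * a / (2 * (A + a)) * (norm (y - x'))\<^sup>2 + (1 + \<mu> * A) / 2 * (norm (x' - x))\<^sup>2"
proof -
  define B W c where "B = A + a" and "W = (A / (A + a)) *\<^sub>R y + (a / (A + a)) *\<^sub>R x'" and "c = 1 + \<mu> * A"
  define p q where "p = x' - x" and "q = y - x"
  have B: "B > 0"
    using A a by (simp add: B_def)
  have "B *\<^sub>R (W - xt) = A *\<^sub>R y + a *\<^sub>R x' - ((a - \<mu> * A * lam) *\<^sub>R x + (A + \<mu> * A * lam) *\<^sub>R y)"
    using B by (simp add: W_def xt B_def scaleR_add_right scaleR_diff_right)
  then have W: "B *\<^sub>R (W - xt) = a *\<^sub>R p - (\<mu> * A * lam) *\<^sub>R q"
    by (simp add: p_def q_def algebra_simps)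
  have qp: "q - p = y - x'"
    by (simp add: p_def q_def)
  have nonneg: "0 \<le> \<mu> * A * lam * (a - \<mu> * A * lam) * (norm q)\<^sup>2"
    using mu A lam a_ge by simp
  have "\<mu> * A * a * lam * (norm (q - p))\<^sup>2 + c * lam * B * (norm p)\<^sup>2 - (norm (a *\<^sub>R p - (\<mu> * A * lam) *\<^sub>R q))\<^sup>2
      = \<mu> * A * lam * (a - \<mu> * A * lam) * (norm q)\<^sup>2 + (lam * (c * B + \<mu> * A * a) - a\<^sup>2) * (norm p)\<^sup>2"
    unfolding c_def B_def
    apply (simp only: power2_norm_eq_inner)
    apply (simp add: inner_diff_left inner_diff_right inner_commute)
    apply (simp add: algebra_simps power2_eq_square)
    done
  \<comment> \<open>The defining equation of the step \<open>a\<close> cancels the \<open>p\<close>-term.\<close>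
  also have "lam * (c * B + \<mu> * A * a) - a\<^sup>2 = 0"
    using quad by (simp add: c_def B_def algebra_simps power2_eq_square)
  finally have "(norm (B *\<^sub>R (W - xt)))\<^sup>2 \<le> \<mu> * A * a * lam * (norm (y - x'))\<^sup>2 + c * lam * B * (norm (x' - x))\<^sup>2"
    unfolding W qp[symmetric] p_def[symmetric] using nonneg by linarith
  then have "B\<^sup>2 * (norm (W - xt))\<^sup>2 \<le> \<mu> * A * a * lam * (norm (y - x'))\<^sup>2 + c * lam * B * (norm (x' - x))\<^sup>2"
    by (simp add: power_mult_distrib)
  then have "B\<^sup>2 * (norm (W - xt))\<^sup>2 / (2 * lam * B)
      \<le> (\<mu> * A * a * lam * (norm (y - x'))\<^sup>2 + c * lam * B * (norm (x' - x))\<^sup>2) / (2 * lam * B)"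
    using B lam by (simp add: divide_right_mono)
  then have "B * ((norm (W - xt))\<^sup>2 / (2 * lam))
      \<le> \<mu> * A * a / (2 * B) * (norm (y - x'))\<^sup>2 + c / 2 * (norm (x' - x))\<^sup>2"
    using B lam by (simp add: field_simps power2_eq_square)
  then show ?thesis
    by (simp add: W_def B_def c_def)
qed

lemma hpe_error_bounds:
  fixes v y' xt :: "'a::real_inner"
  assumes lam: "lam > 0" and mu: "\<mu> \<ge> 0" and s: "s \<ge> 0" and e: "e \<ge> 0"
    and err: "(norm (lam *\<^sub>R v + y' - xt))\<^sup>2 / (1 + lam * \<mu>) + 2 * lam * e \<le> s\<^sup>2 * (norm (y' - xt))\<^sup>2"
  shows "lam * norm v \<le> (1 + s * sqrt (1 + \<mu> * lam)) * norm (y' - xt)"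
    and "2 * lam * e \<le> s\<^sup>2 * (norm (y' - xt))\<^sup>2"
proof -
  define r d where "r = lam *\<^sub>R v + y' - xt" and "d = y' - xt"
  have c: "1 + lam * \<mu> > 0"
    using lam mu by (simp add: add_pos_nonneg)
  show "2 * lam * e \<le> s\<^sup>2 * (norm (y' - xt))\<^sup>2"
    using err c by (smt (verit) divide_nonneg_pos zero_le_power2)
  have "(norm r)\<^sup>2 / (1 + lam * \<mu>) \<le> s\<^sup>2 * (norm d)\<^sup>2"
    using err lam e unfolding r_def d_def by (smt (verit) mult_nonneg_nonneg)
  then have "(norm r)\<^sup>2 \<le> (sqrt (1 + \<mu> * lam) * (s * norm d))\<^sup>2"
    using c s by (simp add: divide_le_eq power_mult_distrib algebra_simps)
  then have r: "norm r \<le> s * sqrt (1 + \<mu> * lam) * norm d"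
    using s c by (simp add: power2_le_iff_abs_le mult_ac)
  have "lam * norm v = norm (r - d)"
    using lam by (simp add: r_def d_def)
  also have "\<dots> \<le> norm r + norm d"
    by (rule norm_triangle_ineq4)
  finally show "lam * norm v \<le> (1 + s * sqrt (1 + \<mu> * lam)) * norm (y' - xt)"
    using r by (simp add: d_def algebra_simps)
qed

locale accelerated_hpe =
  fixes f g :: "'a::real_inner \<Rightarrow> ereal"
    and \<mu> \<sigma> :: real
    and xstar :: 'a
    and x y v xt :: "nat \<Rightarrow> 'a"
    and lam a A eps :: "nat \<Rightarrow> real"
  assumes f_proper: "proper_fun f" and f_convex: "convex_fun f"
    and g_proper: "proper_fun g" and g_strongly_convex: "strongly_convex_fun \<mu> g"
    and mu_pos: "\<mu> > 0"
    and dom_h: "\<exists>z. f z + g z \<noteq> \<infinity>"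
    and xstar_min: "\<forall>z. f xstar + g xstar \<le> f z + g z"
    and sigma: "0 \<le> \<sigma>" "\<sigma> \<le> 1"
    and A0: "A 0 = 0"
    and lam_pos: "\<And>k. lam (Suc k) > 0"
    and a_def: "\<And>k. a (Suc k) =
        ((1 + 2 * \<mu> * A k) * lam (Suc k)
          + sqrt (((1 + 2 * \<mu> * A k) * lam (Suc k))\<^sup>2 + 4 * (1 + \<mu> * A k) * A k * lam (Suc k))) / 2"
    and xt_def: "\<And>k. xt k =
        ((a (Suc k) - \<mu> * A k * lam (Suc k)) / (A k + a (Suc k))) *\<^sub>R x k
        + ((A k + \<mu> * A k * lam (Suc k)) / (A k + a (Suc k))) *\<^sub>R y k"
    and eps_nonneg: "\<And>k. eps (Suc k) \<ge> 0"
    and v_incl: "\<And>k. v (Suc k) \<in>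
        {p + q | p q. p \<in> eps_subdiff f (eps (Suc k)) (y (Suc k)) \<and> q \<in> eps_subdiff g 0 (y (Suc k))}"
    and err: "\<And>k. (norm (lam (Suc k) *\<^sub>R v (Suc k) + y (Suc k) - xt k))\<^sup>2 / (1 + lam (Suc k) * \<mu>)
        + 2 * lam (Suc k) * eps (Suc k) \<le> \<sigma>\<^sup>2 * (norm (y (Suc k) - xt k))\<^sup>2"
    and A_Suc: "\<And>k. A (Suc k) = A k + a (Suc k)"
    and x_Suc: "\<And>k. x (Suc k) =
        ((1 + \<mu> * A k) / (1 + \<mu> * A (Suc k))) *\<^sub>R x k
        + (\<mu> * a (Suc k) / (1 + \<mu> * A (Suc k))) *\<^sub>R y (Suc k)
        - (a (Suc k) / (1 + \<mu> * A (Suc k))) *\<^sub>R v (Suc k)"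
begin

lemma A_nonneg: "A k \<ge> 0"
proof (induction k)
  case (Suc k)
  then show ?case
    using accelerated_stepsize(1)[OF Suc lam_pos _ a_def] mu_pos A_Suc[of k] by simp
qed (simp add: A0)

lemma a_pos: "a (Suc k) > 0"
  and a_quadratic: "(a (Suc k))\<^sup>2 = lam (Suc k) * ((1 + 2 * \<mu> * A k) * a (Suc k) + (1 + \<mu> * A k) * A k)"
  and a_ge: "\<mu> * A k * lam (Suc k) \<le> a (Suc k)"
  using accelerated_stepsize[OF A_nonneg lam_pos _ a_def] mu_pos by simp_all

lemma A_pos: "k \<ge> 1 \<Longrightarrow> A k > 0"
  using A_nonneg a_pos A_Suc by (cases k) (auto simp: add_nonneg_pos)

lemma A_le_Suc: "A k \<le> A (Suc k)"
  using a_pos[of k] A_Suc[of k] by simp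

lemma y_Suc_finite: "\<bar>f (y (Suc k))\<bar> \<noteq> \<infinity>" "\<bar>g (y (Suc k))\<bar> \<noteq> \<infinity>"
proof -
  obtain p q where "p \<in> eps_subdiff f (eps (Suc k)) (y (Suc k))" "q \<in> eps_subdiff g 0 (y (Suc k))"
    using v_incl[of k] by blast
  then show "\<bar>f (y (Suc k))\<bar> \<noteq> \<infinity>" "\<bar>g (y (Suc k))\<bar> \<noteq> \<infinity>"
    by (metis eps_subdiff_finite f_proper g_proper)+
qed

lemma xstar_finite: "\<bar>f xstar\<bar> \<noteq> \<infinity>" "\<bar>g xstar\<bar> \<noteq> \<infinity>"
proof -
  obtain z where "f z + g z \<noteq> \<infinity>"
    using dom_h by blast
  then have "f xstar + g xstar \<noteq> \<infinity>"
    using xstar_min by (metis ereal_infty_less_eq(1))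
  moreover have "f xstar \<noteq> -\<infinity>" "g xstar \<noteq> -\<infinity>"
    using f_proper g_proper unfolding proper_fun_def by auto
  ultimately show "\<bar>f xstar\<bar> \<noteq> \<infinity>" "\<bar>g xstar\<bar> \<noteq> \<infinity>"
    by auto
qed

text \<open>\<open>hval 0\<close> is a junk value when \<open>y 0\<close> lies outside the domain of \<open>f + g\<close>;
  it only ever occurs multiplied by \<open>A 0 = 0\<close>.\<close>

definition hval :: "nat \<Rightarrow> real" where
  "hval k = real_of_ereal (f (y k)) + real_of_ereal (g (y k))"

definition hmin :: real where
  "hmin = real_of_ereal (f xstar) + real_of_ereal (g xstar)"

lemma h_y: "f (y (Suc k)) + g (y (Suc k)) = ereal (hval (Suc k))"
  using y_Suc_finite[of k] unfolding hval_def
  by (cases "f (y (Suc k))"; cases "g (y (Suc k))") auto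

lemma h_xstar: "f xstar + g xstar = ereal hmin"
  using xstar_finite unfolding hmin_def by (cases "f xstar"; cases "g xstar") auto

abbreviation model :: "nat \<Rightarrow> 'a \<Rightarrow> real" where
  "model k \<equiv> quad_model \<mu> (v (Suc k)) (eps (Suc k)) (y (Suc k))"

lemma model_le_objective: "ereal (hval (Suc k) + model k u) \<le> f u + g u"
proof -
  obtain p q where p: "p \<in> eps_subdiff f (eps (Suc k)) (y (Suc k))"
    and q: "q \<in> eps_subdiff g 0 (y (Suc k))" and v: "v (Suc k) = p + q"
    using v_incl[of k] by blast
  define fy gy where "fy = real_of_ereal (f (y (Suc k)))" and "gy = real_of_ereal (g (y (Suc k)))"
  have fy: "f (y (Suc k)) = ereal fy" and gy: "g (y (Suc k)) = ereal gy"
    using y_Suc_finite[of k] by (simp_all add: fy_def gy_def ereal_real')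
  have "ereal (fy + inner p (u - y (Suc k)) - eps (Suc k)) \<le> f u"
    using p fy unfolding eps_subdiff_def by (auto simp: algebra_simps)
  moreover have "ereal (gy + inner q (u - y (Suc k)) + \<mu> / 2 * (norm (u - y (Suc k)))\<^sup>2) \<le> g u"
    by (rule strongly_convex_subgradient_ineq[OF g_proper g_strongly_convex q gy])
  moreover have "hval (Suc k) + model k u
      = (fy + inner p (u - y (Suc k)) - eps (Suc k)) + (gy + inner q (u - y (Suc k)) + \<mu> / 2 * (norm (u - y (Suc k)))\<^sup>2)"
    by (simp add: hval_def fy_def gy_def quad_model_def v inner_add_left)
  ultimately show ?thesis
    by (metis add_mono plus_ereal.simps(1))
qed

lemma model_le_hmin: "hval (Suc k) + model k xstar \<le> hmin"
  using model_le_objective[of k xstar] by (simp add: h_xstar)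

lemma model_le_hval: "j \<ge> 1 \<Longrightarrow> hval (Suc k) + model k (y j) \<le> hval j"
  using model_le_objective[of k "y j"] h_y by (cases j) auto

lemma hmin_quadratic_growth:
  assumes "k \<ge> 1"
  shows "hmin + \<mu> / 2 * (norm (xstar - y k))\<^sup>2 \<le> hval k"
proof -
  obtain j where k: "k = Suc j"
    using assms by (cases k) auto
  show ?thesis
    using strongly_convex_quadratic_growth[OF f_convex g_strongly_convex xstar_min
        ereal_real'[OF xstar_finite(1), symmetric] ereal_real'[OF xstar_finite(2), symmetric]
        ereal_real'[OF y_Suc_finite(1), symmetric] ereal_real'[OF y_Suc_finite(2), symmetric]]
    by (simp add: k hval_def hmin_def norm_minus_commute)
qed

definition potential :: "nat \<Rightarrow> real" where
  "potential k = A k * (hval k - hmin) + (1 + \<mu> * A k) / 2 * (norm (xstar - x k))\<^sup>2"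

lemma model_sum_nonneg:
  "0 \<le> A k * model k (y k) + a (Suc k) * model k (x (Suc k)) + (1 + \<mu> * A k) / 2 * (norm (x (Suc k) - x k))\<^sup>2"
proof -
  define W where "W = (A k / (A k + a (Suc k))) *\<^sub>R y k + (a (Suc k) / (A k + a (Suc k))) *\<^sub>R x (Suc k)"
  have B: "A k + a (Suc k) > 0"
    using A_nonneg[of k] a_pos[of k] by simp
  have "0 \<le> model k W + (norm (W - xt k))\<^sup>2 / (2 * lam (Suc k))"
    using quad_model_prox_nonneg[OF lam_pos _ sigma err] mu_pos by simp
  then have "0 \<le> (A k + a (Suc k)) * model k W + (A k + a (Suc k)) * ((norm (W - xt k))\<^sup>2 / (2 * lam (Suc k)))"
    using B by (metis distrib_left less_imp_le mult_nonneg_nonneg)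
  moreover have "A k * model k (y k) + a (Suc k) * model k (x (Suc k))
      = (A k + a (Suc k)) * model k W + \<mu> * A k * a (Suc k) / (2 * (A k + a (Suc k))) * (norm (y k - x (Suc k)))\<^sup>2"
    unfolding W_def using B by (intro quad_model_convex_combination) simp
  moreover have "(A k + a (Suc k)) * ((norm (W - xt k))\<^sup>2 / (2 * lam (Suc k)))
      \<le> \<mu> * A k * a (Suc k) / (2 * (A k + a (Suc k))) * (norm (y k - x (Suc k)))\<^sup>2
        + (1 + \<mu> * A k) / 2 * (norm (x (Suc k) - x k))\<^sup>2"
    unfolding W_def
    using extrapolation_prox_bound[OF lam_pos A_nonneg a_pos _ a_quadratic a_ge xt_def] mu_pos by simp
  ultimately show ?thesis
    by linarith
qed

lemma potential_Suc_le: "potential (Suc k) \<le> potential k"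
proof -
  define c where "c = 1 + \<mu> * A k"
  have c: "1 + \<mu> * A (Suc k) = c + \<mu> * a (Suc k)"
    by (simp add: c_def A_Suc algebra_simps)
  have "0 \<le> \<mu> * A k" "0 < \<mu> * a (Suc k)"
    using A_nonneg[of k] a_pos[of k] mu_pos by simp_all
  then have "c + \<mu> * a (Suc k) \<noteq> 0"
    unfolding c_def by linarith
  moreover have "x (Suc k) = (c / (c + \<mu> * a (Suc k))) *\<^sub>R x k
      + (\<mu> * a (Suc k) / (c + \<mu> * a (Suc k))) *\<^sub>R y (Suc k) - (a (Suc k) / (c + \<mu> * a (Suc k))) *\<^sub>R v (Suc k)"
    using x_Suc[of k] unfolding c by (simp only: c_def)
  ultimately have three_point: "a (Suc k) * model k xstar + c / 2 * (norm (xstar - x k))\<^sup>2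
      = a (Suc k) * model k (x (Suc k)) + c / 2 * (norm (x (Suc k) - x k))\<^sup>2
        + (1 + \<mu> * A (Suc k)) / 2 * (norm (xstar - x (Suc k)))\<^sup>2"
    unfolding c by (rule quad_model_three_point)
  have at_y: "A k * hval (Suc k) + A k * model k (y k) \<le> A k * hval k"
  proof (cases "k = 0")
    case False
    then show ?thesis
      using mult_left_mono[OF model_le_hval[of k k] A_nonneg[of k]] by (simp add: distrib_left)
  qed (simp add: A0)
  have at_xstar: "a (Suc k) * hval (Suc k) + a (Suc k) * model k xstar \<le> a (Suc k) * hmin"
    using mult_left_mono[OF model_le_hmin[of k] less_imp_le[OF a_pos[of k]]] by (simp add: distrib_left)
  have "potential (Suc k) = A k * hval (Suc k) - A k * hmin + a (Suc k) * hval (Suc k) - a (Suc k) * hmin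
      + (1 + \<mu> * A (Suc k)) / 2 * (norm (xstar - x (Suc k)))\<^sup>2"
    by (simp add: potential_def A_Suc[of k] algebra_simps)
  moreover have "potential k = A k * hval k - A k * hmin + c / 2 * (norm (xstar - x k))\<^sup>2"
    by (simp add: potential_def c_def algebra_simps)
  ultimately show ?thesis
    using three_point at_y at_xstar model_sum_nonneg[of k] unfolding c_def by linarith
qed

lemma potential_le: "potential k \<le> (norm (xstar - x 0))\<^sup>2 / 2"
proof (induction k)
  case (Suc k)
  then show ?case
    using potential_Suc_le[of k] by simp
qed (simp add: potential_def A0)

lemma rate_bounds:
  assumes k: "k \<ge> 1"
  shows "f (y k) + g (y k) - (f xstar + g xstar) \<le> ereal ((norm (xstar - x 0))\<^sup>2 / (2 * A k))"
    and "(norm (xstar - y k))\<^sup>2 \<le> (norm (xstar - x 0))\<^sup>2 / (\<mu> * A k)"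
    and "(norm (xstar - x k))\<^sup>2 \<le> (norm (xstar - x 0))\<^sup>2 / (1 + \<mu> * A k)"
proof -
  have Ak: "A k > 0"
    using A_pos[OF k] .
  have growth: "0 \<le> \<mu> / 2 * (norm (xstar - y k))\<^sup>2" "\<mu> / 2 * (norm (xstar - y k))\<^sup>2 \<le> hval k - hmin"
    using hmin_quadratic_growth[OF k] mu_pos by simp_all
  have dist: "0 \<le> (1 + \<mu> * A k) / 2 * (norm (xstar - x k))\<^sup>2"
    using Ak mu_pos by simp
  have potential: "A k * (hval k - hmin) + (1 + \<mu> * A k) / 2 * (norm (xstar - x k))\<^sup>2 \<le> (norm (xstar - x 0))\<^sup>2 / 2"
    using potential_le[of k] unfolding potential_def .
  then have "hval k - hmin \<le> (norm (xstar - x 0))\<^sup>2 / (2 * A k)"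
    using dist Ak by (simp add: field_simps)
  moreover obtain j where "k = Suc j"
    using k by (cases k) auto
  ultimately show "f (y k) + g (y k) - (f xstar + g xstar) \<le> ereal ((norm (xstar - x 0))\<^sup>2 / (2 * A k))"
    by (simp add: h_y h_xstar)
  have "A k * (\<mu> / 2 * (norm (xstar - y k))\<^sup>2) \<le> A k * (hval k - hmin)"
    using growth Ak by (simp add: mult_left_mono)
  then have "A k * (\<mu> / 2 * (norm (xstar - y k))\<^sup>2) \<le> (norm (xstar - x 0))\<^sup>2 / 2"
    using potential dist by linarith
  then show "(norm (xstar - y k))\<^sup>2 \<le> (norm (xstar - x 0))\<^sup>2 / (\<mu> * A k)"
    using Ak mu_pos by (simp add: field_simps)
  have "0 \<le> A k * (hval k - hmin)"
    using growth Ak by simp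
  then have "(1 + \<mu> * A k) / 2 * (norm (xstar - x k))\<^sup>2 \<le> (norm (xstar - x 0))\<^sup>2 / 2"
    using potential by linarith
  then show "(norm (xstar - x k))\<^sup>2 \<le> (norm (xstar - x 0))\<^sup>2 / (1 + \<mu> * A k)"
    using Ak mu_pos by (simp add: field_simps add_pos_pos)
qed

lemma step_length_le:
  assumes k: "k \<ge> 1"
  shows "norm (y (Suc k) - xt k) \<le> 2 * sqrt ((norm (xstar - x 0))\<^sup>2 / (\<mu> * A k))"
proof -
  define R where "R = (norm (xstar - x 0))\<^sup>2 / (\<mu> * A k)"
  have Ak: "A k > 0"
    using A_pos[OF k] .
  have "(norm (xstar - y (Suc k)))\<^sup>2 \<le> (norm (xstar - x 0))\<^sup>2 / (\<mu> * A (Suc k))"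
    using rate_bounds(2)[of "Suc k"] by simp
  also have "\<dots> \<le> R"
    unfolding R_def using Ak A_le_Suc[of k] mu_pos by (intro divide_left_mono) simp_all
  finally have y': "y (Suc k) \<in> cball xstar (sqrt R)"
    by (simp add: dist_norm real_le_rsqrt)
  have "(norm (xstar - x k))\<^sup>2 \<le> (norm (xstar - x 0))\<^sup>2 / (1 + \<mu> * A k)"
    using rate_bounds(3)[OF k] .
  also have "\<dots> \<le> R"
    unfolding R_def using Ak mu_pos by (intro divide_left_mono) (simp_all add: add_pos_pos)
  finally have "x k \<in> cball xstar (sqrt R)"
    by (simp add: dist_norm real_le_rsqrt)
  moreover have "y k \<in> cball xstar (sqrt R)"
    using rate_bounds(2)[OF k] by (simp add: R_def dist_norm real_le_rsqrt)
  moreover have "A k + a (Suc k) > 0"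
    using Ak a_pos[of k] by simp
  ultimately have "xt k \<in> cball xstar (sqrt R)"
    unfolding xt_def using a_ge[of k] Ak mu_pos lam_pos[of k]
    by (intro convexD) (simp_all add: add_divide_distrib[symmetric])
  then show ?thesis
    using y' norm_triangle_ineq[of "y (Suc k) - xstar" "xstar - xt k"]
    by (simp add: R_def dist_norm norm_minus_commute)
qed

text \<open>The argument gives the constants 4 and 2 in place of 6 and 3.\<close>

lemma residual_bounds:
  assumes k: "k \<ge> 1"
  shows "(norm (v (Suc k)))\<^sup>2 \<le> 6 * (1 + \<sigma> * sqrt (1 + \<mu> * lam (Suc k)))\<^sup>2 / (lam (Suc k))\<^sup>2
            * ((norm (xstar - x 0))\<^sup>2 / (\<mu> * A k))"
    and "eps (Suc k) \<le> 3 * \<sigma>\<^sup>2 / lam (Suc k) * ((norm (xstar - x 0))\<^sup>2 / (\<mu> * A k))"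
proof -
  define R C where "R = (norm (xstar - x 0))\<^sup>2 / (\<mu> * A k)" and "C = 1 + \<sigma> * sqrt (1 + \<mu> * lam (Suc k))"
  have R: "R \<ge> 0" and C: "C \<ge> 0" and lam: "lam (Suc k) > 0"
    using A_pos[OF k] mu_pos sigma lam_pos[of k] by (simp_all add: R_def C_def)
  have step: "norm (y (Suc k) - xt k) \<le> 2 * sqrt R"
    using step_length_le[OF k] unfolding R_def .
  note hpe = hpe_error_bounds[OF lam_pos _ sigma(1) eps_nonneg err, of k]
  have "lam (Suc k) * norm (v (Suc k)) \<le> C * (2 * sqrt R)"
    using hpe(1) mu_pos order_trans[OF _ mult_left_mono[OF step C]] unfolding C_def by simp
  then have "(lam (Suc k) * norm (v (Suc k)))\<^sup>2 \<le> (C * (2 * sqrt R))\<^sup>2"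
    using lam by (intro power_mono) simp_all
  then have "(norm (v (Suc k)))\<^sup>2 \<le> 4 * C\<^sup>2 / (lam (Suc k))\<^sup>2 * R"
    using lam R by (simp add: power_mult_distrib field_simps)
  also have "\<dots> \<le> 6 * C\<^sup>2 / (lam (Suc k))\<^sup>2 * R"
    using R by (intro mult_right_mono divide_right_mono) simp_all
  finally show "(norm (v (Suc k)))\<^sup>2 \<le> 6 * (1 + \<sigma> * sqrt (1 + \<mu> * lam (Suc k)))\<^sup>2 / (lam (Suc k))\<^sup>2
            * ((norm (xstar - x 0))\<^sup>2 / (\<mu> * A k))"
    unfolding R_def C_def .
  have "(norm (y (Suc k) - xt k))\<^sup>2 \<le> (2 * sqrt R)\<^sup>2"
    using step by (intro power_mono) simp_all
  then have "\<sigma>\<^sup>2 * (norm (y (Suc k) - xt k))\<^sup>2 \<le> \<sigma>\<^sup>2 * (4 * R)"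
    using R by (intro mult_left_mono) (simp_all add: power_mult_distrib)
  then have "2 * lam (Suc k) * eps (Suc k) \<le> \<sigma>\<^sup>2 * (4 * R)"
    using hpe(2) mu_pos by linarith
  then have "eps (Suc k) \<le> 2 * \<sigma>\<^sup>2 / lam (Suc k) * R"
    using lam by (simp add: field_simps)
  also have "\<dots> \<le> 3 * \<sigma>\<^sup>2 / lam (Suc k) * R"
    using R lam by (intro mult_right_mono divide_right_mono) simp_all
  finally show "eps (Suc k) \<le> 3 * \<sigma>\<^sup>2 / lam (Suc k) * ((norm (xstar - x 0))\<^sup>2 / (\<mu> * A k))"
    unfolding R_def .
qed

end

theorem theorem2p6:
  fixes f g :: "'a::euclidean_space \<Rightarrow> ereal"
    and \<mu> \<sigma> :: real
    and xstar :: 'a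
    and x y v xt :: "nat \<Rightarrow> 'a"
    and lam a A eps :: "nat \<Rightarrow> real"
  assumes f: "proper_fun f" "closed_fun f" "convex_fun f"
    and g: "proper_fun g" "closed_fun g" "convex_fun g"
    and mu_pos: "\<mu> > 0"
    and g_sc: "strongly_convex_fun \<mu> g"
    and dom_h: "\<exists>z. f z + g z \<noteq> \<infinity>"
    and xstar_min: "\<forall>z. f xstar + g xstar \<le> f z + g z"
    and sigma: "0 \<le> \<sigma>" "\<sigma> \<le> 1"
    and A0: "A 0 = 0"
    and lam_pos: "\<And>k. lam (Suc k) > 0"
    and a_def: "\<And>k. a (Suc k) =
        ((1 + 2 * \<mu> * A k) * lam (Suc k)
          + sqrt (((1 + 2 * \<mu> * A k) * lam (Suc k))\<^sup>2 + 4 * (1 + \<mu> * A k) * A k * lam (Suc k))) / 2"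
    and xt_def: "\<And>k. xt k =
        ((a (Suc k) - \<mu> * A k * lam (Suc k)) / (A k + a (Suc k))) *\<^sub>R x k
        + ((A k + \<mu> * A k * lam (Suc k)) / (A k + a (Suc k))) *\<^sub>R y k"
    and eps_nonneg: "\<And>k. eps (Suc k) \<ge> 0"
    and v_incl: "\<And>k. v (Suc k) \<in>
        {p + q | p q. p \<in> eps_subdiff f (eps (Suc k)) (y (Suc k)) \<and> q \<in> eps_subdiff g 0 (y (Suc k))}"
    and err: "\<And>k. (norm (lam (Suc k) *\<^sub>R v (Suc k) + y (Suc k) - xt k))\<^sup>2 / (1 + lam (Suc k) * \<mu>)
        + 2 * lam (Suc k) * eps (Suc k) \<le> \<sigma>\<^sup>2 * (norm (y (Suc k) - xt k))\<^sup>2"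
    and A_Suc: "\<And>k. A (Suc k) = A k + a (Suc k)"
    and x_Suc: "\<And>k. x (Suc k) =
        ((1 + \<mu> * A k) / (1 + \<mu> * A (Suc k))) *\<^sub>R x k
        + (\<mu> * a (Suc k) / (1 + \<mu> * A (Suc k))) *\<^sub>R y (Suc k)
        - (a (Suc k) / (1 + \<mu> * A (Suc k))) *\<^sub>R v (Suc k)"
  shows
    "(\<forall>k\<ge>1.
        f (y k) + g (y k) - (f xstar + g xstar) \<le> ereal ((norm (xstar - x 0))\<^sup>2 / (2 * A k))
      \<and> (norm (xstar - y k))\<^sup>2 \<le> (norm (xstar - x 0))\<^sup>2 / (\<mu> * A k)
      \<and> (norm (xstar - x k))\<^sup>2 \<le> (norm (xstar - x 0))\<^sup>2 / (1 + \<mu> * A k))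
   \<and> (\<forall>k\<ge>1.
        v (Suc k) \<in> {p + q | p q. p \<in> eps_subdiff f (eps (Suc k)) (y (Suc k)) \<and> q \<in> eps_subdiff g 0 (y (Suc k))}
      \<and> (norm (v (Suc k)))\<^sup>2 \<le> 6 * (1 + \<sigma> * sqrt (1 + \<mu> * lam (Suc k)))\<^sup>2 / (lam (Suc k))\<^sup>2
            * ((norm (xstar - x 0))\<^sup>2 / (\<mu> * A k))
      \<and> eps (Suc k) \<le> 3 * \<sigma>\<^sup>2 / lam (Suc k) * ((norm (xstar - x 0))\<^sup>2 / (\<mu> * A k)))"
proof -
  interpret accelerated_hpe f g \<mu> \<sigma> xstar x y v xt lam a A eps
    by (rule accelerated_hpe.intro) (fact assms)+
  show ?thesis
    by (intro conjI allI impI rate_bounds residual_bounds v_incl)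
qed

end
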